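(* $R(B_2,B_{10}) \ge 25$; that is, there exists a graph on $24$ vertices containing no copy of $B_2$ whose complement contains no copy of $B_{10}$.
   Context: For graphs $G,H$, the Ramsey number $R(G,H)$ is the smallest integer $N$ such that every red/blue coloring of the edges of $K_N$ contains a red copy of $G$ (as a subgraph, not necessarily induced) or a blue copy of $H$. The book $B_k$ is the graph on $k+2$ vertices consisting of an edge $uv$ together with $k$ further vertices, each adjacent exactly to $u$ and $v$. *)

theory Defs
  imports Main
begin

text \<open>A graph with vertex set {0..<n} is given by a pair (n, E), where E is a
symmetric irreflexive edge relation (only its values on {0..<n} matter).\<close>

type_synonym graph = "nat \<times> (nat \<Rightarrow> nat \<Rightarrow> bool)"

text \<open>The book B_k: vertices 0 (=u), 1 (=v), 2..k+1 (pages).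
Edges: uv, and u-i, v-i for each page i.\<close>
definition book :: "nat \<Rightarrow> graph" where
  "book k = (k + 2, (\<lambda>x y. x \<noteq> y \<and> (x \<le> 1 \<or> y \<le> 1)))"

definition contains_copy :: "nat \<Rightarrow> (nat \<Rightarrow> nat \<Rightarrow> bool) \<Rightarrow> graph \<Rightarrow> bool" where
  "contains_copy N E G \<longleftrightarrow>
     (\<exists>f. inj_on f {0..<fst G} \<and> f ` {0..<fst G} \<subseteq> {0..<N} \<and>
          (\<forall>x\<in>{0..<fst G}. \<forall>y\<in>{0..<fst G}. snd G x y \<longrightarrow> E (f x) (f y)))"

text \<open>A red/blue colouring of the edges of K_N: a symmetric predicate red on
pairs of distinct vertices of {0..<N}; the other edges are blue.
N arrows (G,H): every colouring has a red G or a blue H.\<close>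
definition arrows :: "nat \<Rightarrow> graph \<Rightarrow> graph \<Rightarrow> bool" where
  "arrows N G H \<longleftrightarrow>
     (\<forall>red :: nat \<Rightarrow> nat \<Rightarrow> bool. (\<forall>x y. red x y = red y x) \<longrightarrow>
        contains_copy N (\<lambda>x y. x \<noteq> y \<and> red x y) G \<or>
        contains_copy N (\<lambda>x y. x \<noteq> y \<and> \<not> red x y) H)"

definition ramsey_number :: "graph \<Rightarrow> graph \<Rightarrow> nat" where
  "ramsey_number G H = (LEAST N. arrows N G H)"

end

theory Submission
  imports Defs
begin

text \<open>A book \<open>B\<^sub>k\<close> is an edge together with \<open>k\<close> common neighbours of its ends. The
witness is an explicit graph on 24 vertices in which every edge lies in at most one
triangle (so it has no \<open>B\<^sub>2\<close>) and any two distinct non-adjacent vertices have at most 9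
common non-neighbours (so its complement has no \<open>B\<^sub>10\<close>). Since containing a copy is monotone in the number of vertices, no
\<open>N \<le> 24\<close> arrows \<open>(B\<^sub>2, B\<^sub>10)\<close>.\<close>

lemma contains_copy_mono:
  assumes "contains_copy N E G" and "N \<le> M"
  shows "contains_copy M E G"
  using assms unfolding contains_copy_def by fastforce

lemma arrows_mono:
  assumes "arrows N G H" and "N \<le> M"
  shows "arrows M G H"
  using assms contains_copy_mono unfolding arrows_def by blast

lemma contains_book_imp_common_neighbours:
  assumes "contains_copy N E (book k)"
  obtains u v where "u < N" "v < N" "E u v" "k \<le> card {w \<in> {0..<N}. E u w \<and> E v w}"
proof -
  obtain f where inj: "inj_on f {0..<k + 2}" and rng: "f ` {0..<k + 2} \<subseteq> {0..<N}"
    and edge: "\<And>x y. x < k + 2 \<Longrightarrow> y < k + 2 \<Longrightarrow> x \<noteq> y \<Longrightarrow> x \<le> 1 \<or> y \<le> 1 \<Longrightarrow> E (f x) (f y)"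
    using assms by (auto simp: contains_copy_def book_def)
  let ?C = "{w \<in> {0..<N}. E (f 0) w \<and> E (f 1) w}"
  have pages: "f ` {2..<k + 2} \<subseteq> ?C"
    using rng edge by fastforce
  have "k = card (f ` {2..<k + 2})"
    using card_image[OF inj_on_subset[OF inj]] by simp
  also have "\<dots> \<le> card ?C"
    using pages by (intro card_mono) auto
  moreover have "f 0 < N" "f 1 < N"
    using rng by (auto simp: image_subset_iff)
  ultimately show thesis
    using that[of "f 0" "f 1"] edge by auto
qed

lemma list_all_zip_upt_nth:
  assumes "length as = n" and "list_all (\<lambda>(x, a). Q x a) (zip [0..<n] as)" and "i < n"
  shows "Q i (as ! i)"
proof -
  have "(i, as ! i) \<in> set (zip [0..<n] as)"
    using assms(1,3) by (auto simp: in_set_zip intro!: exI[of _ i])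
  then show ?thesis
    using assms(2) by (auto simp: list_all_iff)
qed

definition witness_neighbours :: "nat list list" where
  "witness_neighbours =
    [[3, 4, 6, 11, 13, 15, 19, 22, 23], [2, 3, 4, 10, 11, 14, 19, 21],
     [1, 3, 5, 6, 7, 13, 15, 18, 23], [0, 1, 2, 8, 9, 12, 16, 17, 20],
     [0, 1, 6, 7, 8, 10, 12, 18, 20], [2, 6, 8, 10, 11, 12, 19, 20, 22],
     [0, 2, 4, 5, 9, 14, 16, 17, 21], [2, 4, 8, 9, 11, 16, 21, 22, 23],
     [3, 4, 5, 7, 13, 14, 15, 17, 19], [3, 6, 7, 10, 12, 14, 15, 19, 22],
     [1, 4, 5, 9, 13, 15, 16, 17, 23], [0, 1, 5, 7, 12, 14, 15, 16, 17],
     [3, 4, 5, 9, 11, 13, 18, 21, 23], [0, 2, 8, 10, 12, 14, 16, 21, 22],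
     [1, 6, 8, 9, 11, 13, 20, 23], [0, 2, 8, 9, 10, 11, 18, 20, 21],
     [3, 6, 7, 10, 11, 13, 18, 19, 20], [3, 6, 8, 10, 11, 18, 21, 22, 23],
     [2, 4, 12, 15, 16, 17, 19, 22], [0, 1, 5, 8, 9, 16, 18, 21, 23],
     [3, 4, 5, 14, 15, 16, 21, 22, 23], [1, 6, 7, 12, 13, 15, 17, 19, 20],
     [0, 5, 7, 9, 13, 17, 18, 20], [0, 2, 7, 10, 12, 14, 17, 19, 20]]"

definition witness_adj :: "nat \<Rightarrow> nat \<Rightarrow> bool" where
  "witness_adj x y \<longleftrightarrow> x < 24 \<and> y < 24 \<and> y \<in> set (witness_neighbours ! x)"

text \<open>The bound 13 on the union of two neighbourhoods is \<open>24 - 2 - 9\<close>: it leaves at most 9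
common non-neighbours besides \<open>x\<close> and \<open>y\<close>.\<close>

definition witness_pair_ok :: "nat \<Rightarrow> nat list \<Rightarrow> nat \<Rightarrow> nat list \<Rightarrow> bool" where
  "witness_pair_ok x Nx y Ny \<longleftrightarrow>
     list_all (\<lambda>z. z < 24) Nx \<and> x \<notin> set Nx \<and> (y \<in> set Nx \<longleftrightarrow> x \<in> set Ny) \<and>
     (if y \<in> set Nx then length (filter (\<lambda>z. z \<in> set Ny) Nx) \<le> 1
      else x = y \<or> 13 \<le> length (remdups (Nx @ Ny)))"

lemma length_witness_neighbours: "length witness_neighbours = 24"
  by (simp add: witness_neighbours_def)

lemma witness_pair_ok_all_pairs:
  "list_all (\<lambda>(x, Nx). list_all (\<lambda>(y, Ny). witness_pair_ok x Nx y Ny)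
     (zip [0..<24] witness_neighbours)) (zip [0..<24] witness_neighbours)"
  by (simp add: witness_neighbours_def upt_rec witness_pair_ok_def)

lemma witness_pair_ok:
  assumes "x < 24" and "y < 24"
  shows "witness_pair_ok x (witness_neighbours ! x) y (witness_neighbours ! y)"
proof -
  have row: "list_all (\<lambda>(y, Ny). witness_pair_ok x (witness_neighbours ! x) y Ny)
      (zip [0..<24] witness_neighbours)"
    using list_all_zip_upt_nth[OF length_witness_neighbours witness_pair_ok_all_pairs assms(1)]
    by simp
  then show ?thesis
    using list_all_zip_upt_nth[OF length_witness_neighbours row assms(2)] by simp
qed

lemma witness_adj_sym: "witness_adj x y \<longleftrightarrow> witness_adj y x"
  unfolding witness_adj_def using witness_pair_ok by (auto simp: witness_pair_ok_def)

lemma witness_neighbours_less: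
  assumes "x < 24" and "z \<in> set (witness_neighbours ! x)"
  shows "z < 24"
  using witness_pair_ok[OF assms(1) assms(1)] assms(2)
  by (auto simp: witness_pair_ok_def list_all_iff)

lemma witness_edge_common_neighbours:
  assumes "witness_adj x y"
  shows "card {w. witness_adj x w \<and> witness_adj y w} \<le> 1"
proof -
  let ?Nx = "witness_neighbours ! x" and ?Ny = "witness_neighbours ! y"
  have xy: "x < 24" "y < 24" "y \<in> set ?Nx"
    using assms by (auto simp: witness_adj_def)
  have "{w. witness_adj x w \<and> witness_adj y w} = set (filter (\<lambda>z. z \<in> set ?Ny) ?Nx)"
    using xy witness_neighbours_less by (auto simp: witness_adj_def)
  moreover have "length (filter (\<lambda>z. z \<in> set ?Ny) ?Nx) \<le> 1"
    using witness_pair_ok[OF xy(1,2)] xy(3) by (simp add: witness_pair_ok_def)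
  ultimately show ?thesis
    by (metis card_length order_trans)
qed

lemma witness_nonedge_common_nonneighbours:
  assumes "x < 24" "y < 24" "x \<noteq> y" "\<not> witness_adj x y"
  shows "card {w \<in> {0..<24}. w \<noteq> x \<and> w \<noteq> y \<and> \<not> witness_adj x w \<and> \<not> witness_adj y w} \<le> 9"
proof -
  let ?Nx = "witness_neighbours ! x" and ?Ny = "witness_neighbours ! y"
  let ?U = "{x, y} \<union> set ?Nx \<union> set ?Ny"
  have ok: "witness_pair_ok x ?Nx y ?Ny" "witness_pair_ok x ?Nx x ?Nx" "witness_pair_ok y ?Ny y ?Ny"
    using assms witness_pair_ok by auto
  have y_Nx: "y \<notin> set ?Nx" and x_Ny: "x \<notin> set ?Ny"
    using assms ok(1) by (auto simp: witness_adj_def witness_pair_ok_def)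
  have "{w \<in> {0..<24}. w \<noteq> x \<and> w \<noteq> y \<and> \<not> witness_adj x w \<and> \<not> witness_adj y w} = {0..<24} - ?U"
    using assms by (auto simp: witness_adj_def)
  moreover have U_sub: "?U \<subseteq> {0..<24}"
    using assms witness_neighbours_less by auto
  moreover have "card ?U \<ge> 15"
  proof -
    have "13 \<le> card (set ?Nx \<union> set ?Ny)"
      using ok(1) y_Nx assms(3) by (simp add: witness_pair_ok_def length_remdups_card_conv)
    moreover have "card ?U = card {x, y} + card (set ?Nx \<union> set ?Ny)"
      using y_Nx x_Ny ok(2,3) by (subst Un_assoc, intro card_Un_disjoint)
        (auto simp: witness_pair_ok_def)
    ultimately show ?thesis
      using assms(3) by simp
  qed
  ultimately show ?thesis
    using card_Diff_subset[OF finite_subset[OF U_sub] U_sub] by simp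
qed

lemma witness_book2_free:
  "\<not> contains_copy N (\<lambda>x y. x \<noteq> y \<and> witness_adj x y) (book 2)"
proof
  assume "contains_copy N (\<lambda>x y. x \<noteq> y \<and> witness_adj x y) (book 2)"
  then obtain u v where "witness_adj u v"
    and "2 \<le> card {w \<in> {0..<N}. (u \<noteq> w \<and> witness_adj u w) \<and> v \<noteq> w \<and> witness_adj v w}"
    by (rule contains_book_imp_common_neighbours) blast
  moreover have "card {w \<in> {0..<N}. (u \<noteq> w \<and> witness_adj u w) \<and> v \<noteq> w \<and> witness_adj v w}
      \<le> card {w. witness_adj u w \<and> witness_adj v w}"
    by (rule card_mono, rule finite_subset[of _ "{0..<24}"]) (auto simp: witness_adj_def)
  ultimately have "2 \<le> card {w. witness_adj u w \<and> witness_adj v w}"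
    by linarith
  with witness_edge_common_neighbours[OF \<open>witness_adj u v\<close>] show False
    by simp
qed

lemma witness_complement_book10_free:
  "\<not> contains_copy 24 (\<lambda>x y. x \<noteq> y \<and> \<not> witness_adj x y) (book 10)"
proof
  assume "contains_copy 24 (\<lambda>x y. x \<noteq> y \<and> \<not> witness_adj x y) (book 10)"
  then obtain u v where "u < 24" "v < 24" "u \<noteq> v" "\<not> witness_adj u v"
    and "10 \<le> card {w \<in> {0..<24}. (u \<noteq> w \<and> \<not> witness_adj u w) \<and> v \<noteq> w \<and> \<not> witness_adj v w}"
    by (rule contains_book_imp_common_neighbours) blast
  moreover have "{w \<in> {0..<24}. (u \<noteq> w \<and> \<not> witness_adj u w) \<and> v \<noteq> w \<and> \<not> witness_adj v w}
      = {w \<in> {0..<24}. w \<noteq> u \<and> w \<noteq> v \<and> \<not> witness_adj u w \<and> \<not> witness_adj v w}"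
    by auto
  ultimately show False
    using witness_nonedge_common_nonneighbours[of u v] by simp
qed

theorem mainTheorem6:
  shows "\<forall>N. arrows N (book 2) (book 10) \<longrightarrow> 25 \<le> N"
proof (intro allI impI)
  fix N
  assume "arrows N (book 2) (book 10)"
  have "\<not> arrows 24 (book 2) (book 10)"
    unfolding arrows_def using witness_adj_sym witness_book2_free witness_complement_book10_free
    by blast
  with \<open>arrows N (book 2) (book 10)\<close> show "25 \<le> N"
    using arrows_mono[of N _ _ 24] by fastforce
qed

end
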